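(* The critical push-pull ring with an even number $M$ of servers (i.e. with $\lambda_i=\mu_i$ for all $i=1,\dots,M$) is non-stabilizable: there is no deterministic stationary non-idling policy under which the associated Markov jump process has a positive recurrent class that is entered with probability 1.
   Context: A push-pull ring has $M\ge2$ servers and $M$ job streams, with strictly positive rates $\lambda_i,\mu_i$, $i=1,\dots,M$; all index arithmetic is modulo $M$ on $\{1,\dots,M\}$. The state is $(x_1,\dots,x_M)\in\mathbb{Z}_+^M$, $x_i$ being the number of jobs in queue $i$ (stream $i$). Server $i$ can either "push" on stream $i$ (an operation completing at exponential rate $\lambda_i$ and adding one job to queue $i$; always allowed) or "pull" from queue $i-1$ (completing at exponential rate $\mu_{i-1}$ and removing one job from queue $i-1$; allowed only if $x_{i-1}>0$). Durations are exponential, preemption is allowed. A non-idling (deterministic stationary) policy is a map $\mathcal{P}:\mathbb{Z}_+^M\to\{\text{push},\text{pull}\}^M$ respecting these restrictions. Given $\mathcal{P}$, all $M$ chosen operations run simultaneously at their exponential rates and the state jumps according to whichever completes first, giving a Markov jump process. The network is stabilizable if some non-idling policy makes this process have a positive recurrent class entered with probability 1, and non-stabilizable otherwise. *)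

theory Defs
  imports "HOL-Analysis.Analysis"
begin

text \<open>A Markov jump process on a countable set of states is described by its
embedded jump chain kernel K (K x y = probability that the jump from x goes to y)
and by its total jump rate q x > 0 (holding time in x is exponential with rate q x).\<close>

text \<open>taboo K A x n y = P_x(X_n = y and X_k not in A for all 1 <= k <= n),
where X is the embedded jump chain started at x.\<close>
fun taboo :: "('a \<Rightarrow> 'a \<Rightarrow> ennreal) \<Rightarrow> 'a set \<Rightarrow> 'a \<Rightarrow> nat \<Rightarrow> 'a \<Rightarrow> ennreal" where
  "taboo K A x 0 y = (if y = x then 1 else 0)"
| "taboo K A x (Suc n) y = (if y \<in> A then 0 else (\<Sum>\<^sub>\<infinity> z. taboo K A x n z * K z y))"

definition reaches :: "('a \<Rightarrow> 'a \<Rightarrow> ennreal) \<Rightarrow> 'a \<Rightarrow> 'a \<Rightarrow> bool" where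
  "reaches K x y \<longleftrightarrow> (\<exists>n. taboo K {} x n y \<noteq> 0)"

definition return_prob :: "('a \<Rightarrow> 'a \<Rightarrow> ennreal) \<Rightarrow> 'a \<Rightarrow> ennreal" where
  "return_prob K s = (\<Sum>\<^sub>\<infinity> n. \<Sum>\<^sub>\<infinity> z. taboo K {s} s n z * K z s)"

text \<open>Expected (continuous) time until the first return to s, started at s:
sum over the jumps n before the return of the mean holding time 1/q(X_n).\<close>
definition mean_return_time :: "('a \<Rightarrow> 'a \<Rightarrow> ennreal) \<Rightarrow> ('a \<Rightarrow> real) \<Rightarrow> 'a \<Rightarrow> ennreal" where
  "mean_return_time K q s = (\<Sum>\<^sub>\<infinity> n. \<Sum>\<^sub>\<infinity> z. taboo K {s} s n z / ennreal (q z))"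

definition positive_recurrent :: "('a \<Rightarrow> 'a \<Rightarrow> ennreal) \<Rightarrow> ('a \<Rightarrow> real) \<Rightarrow> 'a \<Rightarrow> bool" where
  "positive_recurrent K q s \<longleftrightarrow> return_prob K s = 1 \<and> mean_return_time K q s < \<infinity>"

definition pos_rec_class :: "('a \<Rightarrow> 'a \<Rightarrow> ennreal) \<Rightarrow> ('a \<Rightarrow> real) \<Rightarrow> 'a set \<Rightarrow> 'a set \<Rightarrow> bool" where
  "pos_rec_class K q S C \<longleftrightarrow>
     (\<exists>s\<in>S. positive_recurrent K q s \<and> C = {y \<in> S. reaches K s y \<and> reaches K y s})"

definition hit_prob :: "('a \<Rightarrow> 'a \<Rightarrow> ennreal) \<Rightarrow> 'a set \<Rightarrow> 'a \<Rightarrow> ennreal" where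
  "hit_prob K C x = (if x \<in> C then 1 else
      (\<Sum>\<^sub>\<infinity> n. \<Sum>\<^sub>\<infinity> z. taboo K C x n z * (\<Sum>\<^sub>\<infinity> y\<in>C. K z y)))"

definition stable_process :: "('a \<Rightarrow> 'a \<Rightarrow> ennreal) \<Rightarrow> ('a \<Rightarrow> real) \<Rightarrow> 'a set \<Rightarrow> bool" where
  "stable_process K q S \<longleftrightarrow>
     (\<exists>C. pos_rec_class K q S C \<and> (\<forall>x\<in>S. hit_prob K C x = 1))"

text \<open>Servers/streams are indexed 0..M-1 (paper: 1..M); index arithmetic mod M.
States: functions nat => nat vanishing from index M on.\<close>
definition pp_states :: "nat \<Rightarrow> (nat \<Rightarrow> nat) set" where
  "pp_states M = {x. \<forall>i\<ge>M. x i = 0}"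

definition prev :: "nat \<Rightarrow> nat \<Rightarrow> nat" where
  "prev M i = (i + M - 1) mod M"

text \<open>A deterministic stationary policy: P x i = True means server i pulls from
queue i-1 in state x, False means it pushes on stream i.\<close>
type_synonym policy = "(nat \<Rightarrow> nat) \<Rightarrow> nat \<Rightarrow> bool"

definition non_idling :: "nat \<Rightarrow> policy \<Rightarrow> bool" where
  "non_idling M P \<longleftrightarrow> (\<forall>x\<in>pp_states M. \<forall>i<M. P x i \<longrightarrow> x (prev M i) > 0)"

definition op_target :: "nat \<Rightarrow> policy \<Rightarrow> (nat \<Rightarrow> nat) \<Rightarrow> nat \<Rightarrow> (nat \<Rightarrow> nat)" where
  "op_target M P x i =
     (if P x i then x(prev M i := x (prev M i) - 1) else x(i := Suc (x i)))"

definition op_rate :: "nat \<Rightarrow> (nat \<Rightarrow> real) \<Rightarrow> (nat \<Rightarrow> real) \<Rightarrow> policy \<Rightarrow> (nat \<Rightarrow> nat) \<Rightarrow> nat \<Rightarrow> real" where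
  "op_rate M lam mu P x i = (if P x i then mu (prev M i) else lam i)"

definition pp_qtot :: "nat \<Rightarrow> (nat \<Rightarrow> real) \<Rightarrow> (nat \<Rightarrow> real) \<Rightarrow> policy \<Rightarrow> (nat \<Rightarrow> nat) \<Rightarrow> real" where
  "pp_qtot M lam mu P x = (\<Sum>i<M. op_rate M lam mu P x i)"

text \<open>Embedded jump chain: whichever of the M running exponential operations completes first.\<close>
definition pp_kernel :: "nat \<Rightarrow> (nat \<Rightarrow> real) \<Rightarrow> (nat \<Rightarrow> real) \<Rightarrow> policy \<Rightarrow> (nat \<Rightarrow> nat) \<Rightarrow> (nat \<Rightarrow> nat) \<Rightarrow> ennreal" where
  "pp_kernel M lam mu P x y =
     ennreal ((\<Sum>i<M. if op_target M P x i = y then op_rate M lam mu P x i else 0) / pp_qtot M lam mu P x)"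

definition stabilizable :: "nat \<Rightarrow> (nat \<Rightarrow> real) \<Rightarrow> (nat \<Rightarrow> real) \<Rightarrow> bool" where
  "stabilizable M lam mu \<longleftrightarrow>
     (\<exists>P. non_idling M P \<and> stable_process (pp_kernel M lam mu P) (pp_qtot M lam mu P) (pp_states M))"

end

theory Submission
  imports Defs
begin

text \<open>Under any non-idling policy the potential \<open>\<Phi> x = (\<Sum>i. (-1)^i x\<^sub>i / \<lambda>\<^sub>i)\<close> moves, when
  server \<open>i\<close> completes its operation, by \<open>(-1)^i\<close> divided by the rate of that operation: pushing
  on stream \<open>i\<close> and pulling from queue \<open>i - 1\<close> act in the same direction because \<open>M\<close> is even
  and \<open>\<lambda> = \<mu>\<close>. Hence the drift of \<open>\<Phi>\<close> is proportional to \<open>\<Sum>i<M. (-1)^i = 0\<close>, and \<open>\<Phi>\<close> is a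
  martingale of the jump chain whose increments are bounded above and away from zero.
  Suppose some state \<open>s\<close> had finite mean return time. Then the expected occupation measure
  \<open>\<pi>\<close> of an excursion from \<open>s\<close> has finite mass and is subinvariant away from \<open>s\<close>. Integrating
  the one-step behaviour of the truncation \<open>min \<bar>\<Phi> - \<Phi> s\<bar> L\<close> against \<open>\<pi>\<close> gives
  \<open>d \<le> d \<pi>(s) \<le> c \<pi>{\<bar>\<Phi> - \<Phi> s\<bar> > L - c}\<close>, whose right-hand side tends to \<open>0\<close> as \<open>L\<close>
  grows because \<pi> has finite mass.\<close>

lemma dense_linorder_separate_below:
  fixes y :: "'a::{linorder_topology, dense_linorder}"
  assumes "open A" "y \<in> A"
  obtains U V where "open U" "open V" "y \<in> U" "{..<y} - A \<subseteq> V" "U \<inter> V = {}"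
proof (cases "\<exists>x. x < y")
  case True
  then obtain b where "b < y" and b: "{b<..y} \<subseteq> A" using open_left[OF assms] by blast
  then obtain c where "b < c" "c < y" using dense by blast
  have "x < c" if "x < y" "x \<notin> A" for x
  proof -
    have "x \<notin> {b<..y}" using b that by blast
    then have "x \<le> b" using \<open>x < y\<close> by auto
    then show ?thesis using \<open>b < c\<close> by simp
  qed
  with \<open>c < y\<close> show ?thesis by (intro that[of "{c<..}" "{..<c}"]) auto
next
  case False
  then show ?thesis by (intro that[of UNIV "{}"]) auto
qed

lemma dense_linorder_separate_above:
  fixes y :: "'a::{linorder_topology, dense_linorder}"
  assumes "open A" "y \<in> A"
  obtains U V where "open U" "open V" "y \<in> U" "{y<..} - A \<subseteq> V" "U \<inter> V = {}"
proof (cases "\<exists>x. y < x")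
  case True
  then obtain b where "y < b" and b: "{y..<b} \<subseteq> A" using open_right[OF assms] by blast
  then obtain c where "y < c" "c < b" using dense by blast
  have "c < x" if "y < x" "x \<notin> A" for x
  proof -
    have "x \<notin> {y..<b}" using b that by blast
    then have "b \<le> x" using \<open>y < x\<close> by auto
    then show ?thesis using \<open>c < b\<close> by simp
  qed
  with \<open>y < c\<close> show ?thesis by (intro that[of "{..<c}" "{c<..}"]) auto
next
  case False
  then show ?thesis by (intro that[of UNIV "{}"]) auto
qed

instance ennreal :: t3_space
proof
  fix S :: "ennreal set" and y
  assume "closed S" "y \<notin> S"
  then have "open (- S)" "y \<in> - S" by auto
  obtain U\<^sub>1 V\<^sub>1 where "open U\<^sub>1" "open V\<^sub>1" "y \<in> U\<^sub>1" "{..<y} \<inter> S \<subseteq> V\<^sub>1" "U\<^sub>1 \<inter> V\<^sub>1 = {}"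
    using dense_linorder_separate_below[OF \<open>open (- S)\<close> \<open>y \<in> - S\<close>] by auto
  obtain U\<^sub>2 V\<^sub>2 where "open U\<^sub>2" "open V\<^sub>2" "y \<in> U\<^sub>2" "{y<..} \<inter> S \<subseteq> V\<^sub>2" "U\<^sub>2 \<inter> V\<^sub>2 = {}"
    using dense_linorder_separate_above[OF \<open>open (- S)\<close> \<open>y \<in> - S\<close>] by auto
  have "S \<subseteq> V\<^sub>1 \<union> V\<^sub>2"
  proof
    fix x assume "x \<in> S"
    with \<open>y \<notin> S\<close> have "x < y \<or> y < x" by (cases x y rule: linorder_cases) auto
    with \<open>x \<in> S\<close> \<open>{..<y} \<inter> S \<subseteq> V\<^sub>1\<close> \<open>{y<..} \<inter> S \<subseteq> V\<^sub>2\<close> show "x \<in> V\<^sub>1 \<union> V\<^sub>2" by auto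
  qed
  moreover have "(U\<^sub>1 \<inter> U\<^sub>2) \<inter> (V\<^sub>1 \<union> V\<^sub>2) = {}"
    using \<open>U\<^sub>1 \<inter> V\<^sub>1 = {}\<close> \<open>U\<^sub>2 \<inter> V\<^sub>2 = {}\<close> by auto
  ultimately show "\<exists>U V. open U \<and> open V \<and> y \<in> U \<and> S \<subseteq> V \<and> U \<inter> V = {}"
    using \<open>open U\<^sub>1\<close> \<open>open U\<^sub>2\<close> \<open>open V\<^sub>1\<close> \<open>open V\<^sub>2\<close> \<open>y \<in> U\<^sub>1\<close> \<open>y \<in> U\<^sub>2\<close>
    by (intro exI[of _ "U\<^sub>1 \<inter> U\<^sub>2"] exI[of _ "V\<^sub>1 \<union> V\<^sub>2"]) auto
qed

text \<open>The library fact \<open>summable_on_ennreal\<close> is, through a coercion, only about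
  functions of the form \<open>ennreal_of_enat \<circ> f\<close>.\<close>
lemma ennreal_summable_on [simp]: "(f :: 'a \<Rightarrow> ennreal) summable_on A"
  by (simp add: nonneg_summable_on_complete)

lemma infsum_cmult_left_ennreal:
  "(\<Sum>\<^sub>\<infinity>x\<in>A. c * f x) = c * (\<Sum>\<^sub>\<infinity>x\<in>A. (f x :: ennreal))"
  by (simp add: nonneg_infsum_complete SUP_mult_left_ennreal sum_distrib_left)

lemma infsum_cmult_right_ennreal:
  "(\<Sum>\<^sub>\<infinity>x\<in>A. f x * c) = (\<Sum>\<^sub>\<infinity>x\<in>A. (f x :: ennreal)) * c"
  using infsum_cmult_left_ennreal[of c f A] by (simp add: mult.commute)

lemma infsum_swap_ennreal:
  "(\<Sum>\<^sub>\<infinity>x\<in>A. \<Sum>\<^sub>\<infinity>y\<in>B. f x y) = (\<Sum>\<^sub>\<infinity>y\<in>B. \<Sum>\<^sub>\<infinity>x\<in>A. (f x y :: ennreal))"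
proof -
  define S where "S = (\<Sum>\<^sub>\<infinity>(x,y)\<in>A\<times>B. f x y)"
  have AB: "((\<lambda>(x,y). f x y) has_sum S) (A \<times> B)"
    unfolding S_def by (rule has_sum_infsum) simp
  have "((\<lambda>x. \<Sum>\<^sub>\<infinity>y\<in>B. f x y) has_sum S) A"
    by (rule has_sum_SigmaD[where f="\<lambda>(x,y). f x y" and B="\<lambda>_. B", OF AB])
      (auto intro: has_sum_infsum)
  moreover have BA: "((\<lambda>(y,x). f x y) has_sum S) (B \<times> A)"
    using AB by (subst (asm) has_sum_swap) (simp add: case_prod_unfold)
  have "((\<lambda>y. \<Sum>\<^sub>\<infinity>x\<in>A. f x y) has_sum S) B"
    by (rule has_sum_SigmaD[where f="\<lambda>(y,x). f x y" and B="\<lambda>_. A", OF BA])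
      (auto intro: has_sum_infsum)
  ultimately show ?thesis by (simp add: infsumI)
qed

lemma infsum_sum_ennreal:
  assumes "finite I"
  shows "(\<Sum>\<^sub>\<infinity>y\<in>A. \<Sum>i\<in>I. f i y) = (\<Sum>i\<in>I. \<Sum>\<^sub>\<infinity>y\<in>A. (f i y :: ennreal))"
  using assms by induction (simp_all add: infsum_add)

lemma infsum_mixture_ennreal:
  assumes "finite I"
  shows "(\<Sum>\<^sub>\<infinity>y. (\<Sum>i\<in>I. if t i = y then a i else 0) * g y) = (\<Sum>i\<in>I. a i * (g (t i) :: ennreal))"
proof -
  have single: "(\<Sum>\<^sub>\<infinity>y. if x = y then b else 0) = b" for x and b :: ennreal
  proof -
    have "(\<Sum>\<^sub>\<infinity>y. if x = y then b else 0) = (\<Sum>\<^sub>\<infinity>y\<in>{x}. b)"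
      by (rule infsum_cong_neutral) auto
    then show ?thesis by simp
  qed
  have "(\<Sum>\<^sub>\<infinity>y. (\<Sum>i\<in>I. if t i = y then a i else 0) * g y)
      = (\<Sum>\<^sub>\<infinity>y. \<Sum>i\<in>I. if t i = y then a i * g (t i) else 0)"
    by (intro infsum_cong) (auto simp: sum_distrib_right intro: sum.cong)
  also have "\<dots> = (\<Sum>i\<in>I. a i * g (t i))"
    using assms by (simp add: infsum_sum_ennreal single)
  finally show ?thesis .
qed

lemma member_le_infsum_ennreal: "x \<in> A \<Longrightarrow> f x \<le> (\<Sum>\<^sub>\<infinity>y\<in>A. (f y :: ennreal))"
  using infsum_mono_neutral[of f "{x}" f A] by simp

lemma infsum_Suc_le_ennreal: "(\<Sum>\<^sub>\<infinity>n. f (Suc n)) \<le> (\<Sum>\<^sub>\<infinity>n. (f n :: ennreal))"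
proof -
  have "(\<Sum>\<^sub>\<infinity>n. f (Suc n)) = (\<Sum>\<^sub>\<infinity>n\<in>range Suc. f n)"
    by (subst infsum_reindex) (auto simp: comp_def)
  also have "\<dots> \<le> (\<Sum>\<^sub>\<infinity>n. f n)"
    by (rule infsum_mono_neutral) auto
  finally show ?thesis .
qed

lemma infsum_tail_less_ennreal:
  assumes "(\<Sum>\<^sub>\<infinity>x. f x) < (\<infinity> :: ennreal)" and "0 < e"
  obtains F where "finite F" "(\<Sum>\<^sub>\<infinity>x\<in>-F. f x) < e"
proof -
  let ?T = "\<Sum>\<^sub>\<infinity>x. f x"
  have "?T < ?T + e" using assms ennreal_add_left_cancel_less[of ?T 0 e] by simp
  also have "\<dots> = (SUP F\<in>{F. finite F \<and> F \<subseteq> UNIV}. sum f F + e)"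
    by (subst nonneg_infsum_complete) (auto intro!: ennreal_SUP_add_left[symmetric])
  finally obtain F where "finite F" and F: "?T < sum f F + e"
    by (auto simp: less_SUP_iff)
  have "?T = (\<Sum>\<^sub>\<infinity>x\<in>F \<union> -F. f x)" by simp
  also have "\<dots> = sum f F + (\<Sum>\<^sub>\<infinity>x\<in>-F. f x)"
    using \<open>finite F\<close> by (subst infsum_Un_disjoint) auto
  finally show ?thesis
    using F \<open>finite F\<close> that by (simp add: ennreal_add_left_cancel_less)
qed

text \<open>Expected number of visits to \<open>z\<close> by the jump chain started in \<open>s\<close>, before its
  first return to \<open>s\<close> (the start itself counts as a visit to \<open>s\<close>).\<close>
definition excursion_occupation :: "('a \<Rightarrow> 'a \<Rightarrow> ennreal) \<Rightarrow> 'a \<Rightarrow> 'a \<Rightarrow> ennreal" where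
  "excursion_occupation K s z = (\<Sum>\<^sub>\<infinity>n. taboo K {s} s n z)"

lemma taboo_closed:
  assumes "s \<in> S" and closed: "\<And>z y. z \<in> S \<Longrightarrow> K z y \<noteq> 0 \<Longrightarrow> y \<in> S"
    and "taboo K A s n z \<noteq> 0"
  shows "z \<in> S"
  using assms(3)
proof (induction n arbitrary: z)
  case 0
  then show ?case using \<open>s \<in> S\<close> by (simp split: if_splits)
next
  case (Suc n)
  then have "(\<Sum>\<^sub>\<infinity>x. taboo K A s n x * K x z) \<noteq> 0" by (simp split: if_splits)
  then obtain x where "taboo K A s n x * K x z \<noteq> 0"
    using infsum_0[of UNIV "\<lambda>x. taboo K A s n x * K x z"] by blast
  then show ?case using Suc.IH closed by auto
qed

lemma excursion_occupation_closed:
  assumes "s \<in> S" and "\<And>z y. z \<in> S \<Longrightarrow> K z y \<noteq> 0 \<Longrightarrow> y \<in> S"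
    and "excursion_occupation K s z \<noteq> 0"
  shows "z \<in> S"
proof -
  obtain n where "taboo K {s} s n z \<noteq> 0"
    using assms(3) infsum_0[of UNIV "\<lambda>n. taboo K {s} s n z"]
    unfolding excursion_occupation_def by blast
  with assms(1,2) show ?thesis by (rule taboo_closed)
qed

lemma excursion_occupation_start: "1 \<le> excursion_occupation K s s"
  using member_le_infsum_ennreal[of 0 UNIV "\<lambda>n. taboo K {s} s n s"]
  by (simp add: excursion_occupation_def)

lemma excursion_occupation_total_le:
  assumes "\<And>z. 0 < q z" and "\<And>z. q z \<le> Q"
  shows "(\<Sum>\<^sub>\<infinity>z. excursion_occupation K s z) \<le> ennreal Q * mean_return_time K q s"
proof -
  have scale: "t \<le> ennreal Q * (t / ennreal (q z))" for t z
  proof -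
    have "t = t * (ennreal (q z) / ennreal (q z))"
      using assms(1)[of z] by (simp add: divide_ennreal)
    also have "\<dots> = t / ennreal (q z) * ennreal (q z)"
      by (simp add: ennreal_times_divide mult.commute)
    also have "\<dots> \<le> t / ennreal (q z) * ennreal Q"
      using assms(2)[of z] by (intro mult_left_mono ennreal_leI) auto
    finally show ?thesis by (simp add: mult.commute)
  qed
  have "(\<Sum>\<^sub>\<infinity>z. excursion_occupation K s z) = (\<Sum>\<^sub>\<infinity>n. \<Sum>\<^sub>\<infinity>z. taboo K {s} s n z)"
    unfolding excursion_occupation_def by (rule infsum_swap_ennreal)
  also have "\<dots> \<le> (\<Sum>\<^sub>\<infinity>n. \<Sum>\<^sub>\<infinity>z. ennreal Q * (taboo K {s} s n z / ennreal (q z)))"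
    by (intro infsum_mono ennreal_summable_on scale)
  also have "\<dots> = ennreal Q * mean_return_time K q s"
    by (simp add: mean_return_time_def infsum_cmult_left_ennreal)
  finally show ?thesis .
qed

lemma excursion_occupation_subinvariant:
  fixes h :: "'a \<Rightarrow> ennreal"
  assumes "h s = 0"
  shows "(\<Sum>\<^sub>\<infinity>z. excursion_occupation K s z * (\<Sum>\<^sub>\<infinity>y. K z y * h y))
         \<le> (\<Sum>\<^sub>\<infinity>y. excursion_occupation K s y * h y)"
proof -
  let ?t = "taboo K {s} s"
  have step: "(\<Sum>\<^sub>\<infinity>z. ?t n z * (K z y * h y)) = ?t (Suc n) y * h y" for n y
  proof (cases "y = s")
    case False
    have "(\<Sum>\<^sub>\<infinity>z. ?t n z * (K z y * h y)) = (\<Sum>\<^sub>\<infinity>z. ?t n z * K z y) * h y"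
      by (simp only: mult.assoc[symmetric] infsum_cmult_right_ennreal)
    with False show ?thesis by simp
  qed (use assms in simp)
  have "(\<Sum>\<^sub>\<infinity>z. excursion_occupation K s z * (\<Sum>\<^sub>\<infinity>y. K z y * h y))
      = (\<Sum>\<^sub>\<infinity>z. \<Sum>\<^sub>\<infinity>n. \<Sum>\<^sub>\<infinity>y. ?t n z * (K z y * h y))"
    unfolding excursion_occupation_def
    by (simp only: infsum_cmult_left_ennreal infsum_cmult_right_ennreal)
  also have "\<dots> = (\<Sum>\<^sub>\<infinity>n. \<Sum>\<^sub>\<infinity>z. \<Sum>\<^sub>\<infinity>y. ?t n z * (K z y * h y))"
    by (rule infsum_swap_ennreal)
  also have "\<dots> = (\<Sum>\<^sub>\<infinity>n. \<Sum>\<^sub>\<infinity>y. \<Sum>\<^sub>\<infinity>z. ?t n z * (K z y * h y))"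
    by (intro infsum_cong infsum_swap_ennreal)
  also have "\<dots> = (\<Sum>\<^sub>\<infinity>n. \<Sum>\<^sub>\<infinity>y. ?t (Suc n) y * h y)"
    by (simp only: step)
  also have "\<dots> \<le> (\<Sum>\<^sub>\<infinity>n. \<Sum>\<^sub>\<infinity>y. ?t n y * h y)"
    by (rule infsum_Suc_le_ennreal)
  also have "\<dots> = (\<Sum>\<^sub>\<infinity>y. \<Sum>\<^sub>\<infinity>n. ?t n y * h y)"
    by (rule infsum_swap_ennreal)
  also have "\<dots> = (\<Sum>\<^sub>\<infinity>y. excursion_occupation K s y * h y)"
    by (simp add: excursion_occupation_def infsum_cmult_right_ennreal)
  finally show ?thesis .
qed

lemma excursion_occupation_drift_bound:
  fixes H :: "'a \<Rightarrow> ennreal" and c d :: ennreal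
  assumes "H s = 0" and finite: "(\<Sum>\<^sub>\<infinity>z. excursion_occupation K s z * H z) \<noteq> \<infinity>"
    and drift: "\<And>z. excursion_occupation K s z \<noteq> 0 \<Longrightarrow>
      H z + (if z = s then d else 0) \<le> (\<Sum>\<^sub>\<infinity>y. K z y * H y) + (if z \<in> B then c else 0)"
  shows "d \<le> c * (\<Sum>\<^sub>\<infinity>z\<in>B. excursion_occupation K s z)"
proof -
  let ?\<pi> = "excursion_occupation K s"
  define S where "S = (\<Sum>\<^sub>\<infinity>z. ?\<pi> z * H z)"
  have at_s: "(\<Sum>\<^sub>\<infinity>z. ?\<pi> z * (if z = s then d else 0)) = ?\<pi> s * d"
    by (subst infsum_cong_neutral[where T="{s}" and g="\<lambda>_. ?\<pi> s * d"]) auto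
  have on_B: "(\<Sum>\<^sub>\<infinity>z. ?\<pi> z * (if z \<in> B then c else 0)) = c * (\<Sum>\<^sub>\<infinity>z\<in>B. ?\<pi> z)"
    by (subst infsum_cong_neutral[where T=B and g="\<lambda>z. c * ?\<pi> z"])
      (auto simp: infsum_cmult_left_ennreal mult.commute)
  have "S + d \<le> S + ?\<pi> s * d"
    using mult_right_mono[OF excursion_occupation_start, of d K s] by (simp add: add_left_mono)
  also have "\<dots> = (\<Sum>\<^sub>\<infinity>z. ?\<pi> z * (H z + (if z = s then d else 0)))"
    by (simp add: S_def at_s distrib_left infsum_add)
  also have "\<dots> \<le> (\<Sum>\<^sub>\<infinity>z. ?\<pi> z * ((\<Sum>\<^sub>\<infinity>y. K z y * H y) + (if z \<in> B then c else 0)))"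
    using drift by (intro infsum_mono ennreal_summable_on) (metis mult_left_mono mult_zero_left zero_le order_refl)
  also have "\<dots> = (\<Sum>\<^sub>\<infinity>z. ?\<pi> z * (\<Sum>\<^sub>\<infinity>y. K z y * H y)) + c * (\<Sum>\<^sub>\<infinity>z\<in>B. ?\<pi> z)"
    by (simp add: distrib_left infsum_add on_B)
  also have "\<dots> \<le> S + c * (\<Sum>\<^sub>\<infinity>z\<in>B. ?\<pi> z)"
    unfolding S_def by (intro add_right_mono excursion_occupation_subinvariant) fact
  finally show ?thesis
    using finite by (simp add: S_def ennreal_add_left_cancel_le)
qed

lemma excursion_occupation_total_infinite:
  fixes K :: "'a \<Rightarrow> 'a \<Rightarrow> ennreal" and f :: "'a \<Rightarrow> real"
  assumes "0 < c" "0 < d" "f s = 0" "s \<in> S"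
    and closed: "\<And>z y. z \<in> S \<Longrightarrow> K z y \<noteq> 0 \<Longrightarrow> y \<in> S"
    and drift: "\<And>z L. z \<in> S \<Longrightarrow> c \<le> L \<Longrightarrow>
      ennreal (min \<bar>f z\<bar> L) + (if z = s then ennreal d else 0)
        \<le> (\<Sum>\<^sub>\<infinity>y. K z y * ennreal (min \<bar>f y\<bar> L)) + (if L < \<bar>f z\<bar> + c then ennreal c else 0)"
  shows "(\<Sum>\<^sub>\<infinity>z. excursion_occupation K s z) = \<infinity>"
proof (rule ccontr)
  let ?\<pi> = "excursion_occupation K s"
  assume "(\<Sum>\<^sub>\<infinity>z. ?\<pi> z) \<noteq> \<infinity>"
  then have total: "(\<Sum>\<^sub>\<infinity>z. ?\<pi> z) < \<infinity>" by (simp add: less_top)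
  have "0 < ennreal (d / c)" using assms(1,2) by simp
  then obtain F where "finite F" and tail: "(\<Sum>\<^sub>\<infinity>z\<in>-F. ?\<pi> z) < ennreal (d / c)"
    using infsum_tail_less_ennreal[OF total] by blast
  define L where "L = c + (\<Sum>z\<in>F. \<bar>f z\<bar>)"
  define B where "B = {z. L < \<bar>f z\<bar> + c}"
  have "c \<le> L" by (simp add: L_def sum_nonneg)
  have "B \<subseteq> -F"
    using \<open>finite F\<close> member_le_sum[of _ F "\<lambda>z. \<bar>f z\<bar>"] by (force simp: B_def L_def)
  have "(\<Sum>\<^sub>\<infinity>z. ?\<pi> z * ennreal (min \<bar>f z\<bar> L)) \<le> (\<Sum>\<^sub>\<infinity>z. ?\<pi> z * ennreal L)"
    by (intro infsum_mono ennreal_summable_on mult_left_mono ennreal_leI) auto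
  also have "\<dots> < \<infinity>"
    using total by (simp add: infsum_cmult_right_ennreal ennreal_mult_less_top)
  finally have "(\<Sum>\<^sub>\<infinity>z. ?\<pi> z * ennreal (min \<bar>f z\<bar> L)) \<noteq> \<infinity>" by simp
  moreover have "ennreal (min \<bar>f z\<bar> L) + (if z = s then ennreal d else 0)
      \<le> (\<Sum>\<^sub>\<infinity>y. K z y * ennreal (min \<bar>f y\<bar> L)) + (if z \<in> B then ennreal c else 0)"
    if "?\<pi> z \<noteq> 0" for z
    using drift[OF excursion_occupation_closed[OF \<open>s \<in> S\<close> closed that] \<open>c \<le> L\<close>]
    by (simp add: B_def)
  moreover have "ennreal (min \<bar>f s\<bar> L) = 0"
    using \<open>f s = 0\<close> \<open>c \<le> L\<close> \<open>0 < c\<close> by simp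
  ultimately have "ennreal d \<le> ennreal c * (\<Sum>\<^sub>\<infinity>z\<in>B. ?\<pi> z)"
    by (rule excursion_occupation_drift_bound[rotated])
  also have "\<dots> \<le> ennreal c * (\<Sum>\<^sub>\<infinity>z\<in>-F. ?\<pi> z)"
    using \<open>B \<subseteq> -F\<close> by (intro mult_left_mono infsum_mono_neutral) auto
  also have "\<dots> < ennreal c * ennreal (d / c)"
    using tail assms(1) by (intro ennreal_mult_strict_left_mono) auto
  also have "\<dots> = ennreal d"
    using assms(1,2) by (simp add: ennreal_mult[symmetric])
  finally show False by simp
qed

lemma truncated_abs_mixture:
  fixes w v :: "'i \<Rightarrow> real"
  assumes "finite I" and w: "\<And>i. i \<in> I \<Longrightarrow> 0 \<le> w i" and "sum w I = 1"
    and mean: "(\<Sum>i\<in>I. w i * v i) = x"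
    and lower: "\<And>i. i \<in> I \<Longrightarrow> d \<le> \<bar>v i - x\<bar>" and upper: "\<And>i. i \<in> I \<Longrightarrow> \<bar>v i - x\<bar> \<le> c"
    and "c \<le> L"
  shows "min \<bar>x\<bar> L + (if x = 0 then d else 0)
    \<le> (\<Sum>i\<in>I. w i * min \<bar>v i\<bar> L) + (if L < \<bar>x\<bar> + c then c else 0)"
proof -
  have average: "(\<Sum>i\<in>I. w i * a) = a" for a
    using \<open>sum w I = 1\<close> by (simp add: sum_distrib_right[symmetric])
  have below: "a \<le> (\<Sum>i\<in>I. w i * min \<bar>v i\<bar> L)" if "\<And>i. i \<in> I \<Longrightarrow> a \<le> min \<bar>v i\<bar> L" for a
  proof -
    have "(\<Sum>i\<in>I. w i * a) \<le> (\<Sum>i\<in>I. w i * min \<bar>v i\<bar> L)"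
      using w that by (intro sum_mono mult_left_mono) auto
    then show ?thesis by (simp add: average)
  qed
  consider "x = 0" | "x \<noteq> 0" "L < \<bar>x\<bar> + c" | "x \<noteq> 0" "\<bar>x\<bar> + c \<le> L" by linarith
  then show ?thesis
  proof cases
    case 1
    have "d \<le> (\<Sum>i\<in>I. w i * min \<bar>v i\<bar> L)"
      using lower upper \<open>c \<le> L\<close> 1 by (intro below) force
    with 1 \<open>c \<le> L\<close> show ?thesis by simp
  next
    case 2
    have "min \<bar>x\<bar> L - c \<le> (\<Sum>i\<in>I. w i * min \<bar>v i\<bar> L)"
      using upper by (intro below) force
    with 2 show ?thesis by simp
  next
    case 3
    have "\<bar>x\<bar> \<le> (\<Sum>i\<in>I. \<bar>w i * v i\<bar>)"
      unfolding mean[symmetric] by (rule sum_abs)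
    also have "\<dots> = (\<Sum>i\<in>I. w i * min \<bar>v i\<bar> L)"
      using w upper 3 by (intro sum.cong) (force simp: abs_mult)+
    finally show ?thesis using 3 by simp
  qed
qed

lemma prev_less: "0 < M \<Longrightarrow> prev M i < M"
  by (simp add: prev_def)

lemma minus_one_power_prev:
  assumes "even M" and "i < M"
  shows "(-1 :: 'a :: ring_1) ^ prev M i = - ((-1) ^ i)"
proof (cases i)
  case 0
  with assms have "prev M i = M - 1" by (simp add: prev_def)
  with assms(1) \<open>i < M\<close> 0 show ?thesis by (cases M) simp_all
next
  case (Suc j)
  with assms have "prev M i = j" by (simp add: prev_def)
  with Suc show ?thesis by simp
qed

locale critical_even_ring =
  fixes M :: nat and lam mu :: "nat \<Rightarrow> real" and P :: policy
  assumes even_M: "even M" and two_le_M: "2 \<le> M"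
    and lam_pos: "\<forall>i<M. 0 < lam i" and critical: "\<forall>i<M. lam i = mu i"
    and non_idling: "non_idling M P"
begin

abbreviation "rate \<equiv> op_rate M lam mu P"
abbreviation "target \<equiv> op_target M P"
abbreviation "qtot \<equiv> pp_qtot M lam mu P"
abbreviation "K \<equiv> pp_kernel M lam mu P"

lemma rate_eq_lam: "i < M \<Longrightarrow> \<exists>p<M. rate z i = lam p"
  using critical prev_less[of M i] two_le_M by (auto simp: op_rate_def)

lemma rate_pos: "i < M \<Longrightarrow> 0 < rate z i"
  using rate_eq_lam lam_pos by metis

lemma qtot_pos: "0 < qtot z"
  unfolding pp_qtot_def using two_le_M rate_pos by (intro sum_pos) (auto simp: lessThan_empty_iff)

definition max_qtot :: real where
  "max_qtot = (\<Sum>i<M. lam i + mu (prev M i))"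

lemma qtot_le: "qtot z \<le> max_qtot"
  unfolding pp_qtot_def max_qtot_def
proof (rule sum_mono)
  fix i assume "i \<in> {..<M}"
  then have "0 < lam i" "0 < mu (prev M i)"
    using lam_pos critical prev_less[of M i] two_le_M by auto
  then show "rate z i \<le> lam i + mu (prev M i)" by (simp add: op_rate_def)
qed

lemma rate_le:
  assumes "i < M"
  shows "rate z i \<le> max_qtot"
proof -
  have "rate z i \<le> qtot z"
    unfolding pp_qtot_def using assms rate_pos by (intro member_le_sum) (auto intro: less_imp_le)
  then show ?thesis using qtot_le[of z] by simp
qed

definition weight :: "nat \<Rightarrow> (nat \<Rightarrow> nat) \<Rightarrow> real" where
  "weight i z = rate z i / qtot z"

lemma weight_nonneg: "i < M \<Longrightarrow> 0 \<le> weight i z"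
  using rate_pos qtot_pos by (simp add: weight_def less_imp_le)

lemma sum_weight: "(\<Sum>i<M. weight i z) = 1"
  using qtot_pos[of z] by (simp add: weight_def pp_qtot_def sum_divide_distrib[symmetric])

lemma pp_kernel_mixture: "K z y = (\<Sum>i<M. if target z i = y then ennreal (weight i z) else 0)"
proof -
  have "(\<Sum>i<M. if target z i = y then rate z i else 0) / qtot z
      = (\<Sum>i<M. if target z i = y then weight i z else 0)"
    unfolding weight_def sum_divide_distrib by (rule sum.cong) auto
  then have "K z y = ennreal (\<Sum>i<M. if target z i = y then weight i z else 0)"
    by (simp add: pp_kernel_def)
  also have "\<dots> = (\<Sum>i<M. if target z i = y then ennreal (weight i z) else 0)"
    using weight_nonneg by (subst sum_ennreal[symmetric]) (auto intro: sum.cong)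
  finally show ?thesis .
qed

lemma infsum_pp_kernel:
  "(\<Sum>\<^sub>\<infinity>y. K z y * g y) = (\<Sum>i<M. ennreal (weight i z) * g (target z i))"
  unfolding pp_kernel_mixture by (rule infsum_mixture_ennreal) simp

lemma pp_states_closed:
  assumes "z \<in> pp_states M" and "K z y \<noteq> 0"
  shows "y \<in> pp_states M"
proof -
  obtain i where "i < M" "target z i = y"
    using \<open>K z y \<noteq> 0\<close> by (force simp: pp_kernel_mixture intro: ccontr)
  then show ?thesis
    using assms(1) prev_less[of M i] two_le_M by (auto simp: pp_states_def op_target_def)
qed

definition potential :: "(nat \<Rightarrow> nat) \<Rightarrow> real" where
  "potential z = (\<Sum>j<M. (-1) ^ j * real (z j) / lam j)"

lemma potential_fun_upd:
  assumes "k < M"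
  shows "potential (z(k := v)) = potential z + (-1) ^ k * (real v - real (z k)) / lam k"
proof -
  have "potential (z(k := v)) = (\<Sum>j<M. (-1) ^ j * real (z j) / lam j
          + (if j = k then (-1) ^ k * (real v - real (z k)) / lam k else 0))"
    unfolding potential_def by (rule sum.cong) (auto simp: diff_divide_distrib right_diff_distrib)
  also have "\<dots> = potential z + (-1) ^ k * (real v - real (z k)) / lam k"
    using assms by (simp add: potential_def sum.distrib)
  finally show ?thesis .
qed

lemma potential_increment:
  assumes "z \<in> pp_states M" and "i < M"
  shows "potential (target z i) - potential z = (-1) ^ i / rate z i"
proof (cases "P z i")
  case True
  define p where "p = prev M i"
  have "p < M" using prev_less two_le_M by (simp add: p_def)
  have "0 < z p" using non_idling assms True by (auto simp: non_idling_def p_def)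
  have "potential (target z i) - potential z = - ((-1) ^ p / lam p)"
    using True potential_fun_upd[OF \<open>p < M\<close>] \<open>0 < z p\<close>
    by (simp add: op_target_def p_def[symmetric] of_nat_diff)
  also have "\<dots> = (-1) ^ i / lam p"
    unfolding p_def minus_one_power_prev[OF even_M \<open>i < M\<close>] by simp
  also have "lam p = rate z i"
    using True critical \<open>p < M\<close> by (simp add: op_rate_def p_def)
  finally show ?thesis .
next
  case False
  then show ?thesis
    using potential_fun_upd[OF \<open>i < M\<close>] by (simp add: op_target_def op_rate_def)
qed

lemma potential_martingale:
  assumes "z \<in> pp_states M"
  shows "(\<Sum>i<M. weight i z * potential (target z i)) = potential z"
proof -
  have "weight i z * (potential (target z i) - potential z) = (-1) ^ i / qtot z" if "i < M" for i
    using assms that rate_pos[OF that, of z] by (simp add: weight_def potential_increment)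
  then have "(\<Sum>i<M. weight i z * (potential (target z i) - potential z)) = (\<Sum>i<M. (-1) ^ i) / qtot z"
    by (simp add: sum_divide_distrib)
  also have "(\<Sum>i<M. (-1 :: real) ^ i) = 0"
    using even_M by (auto elim!: evenE simp: sum_gp_strict)
  finally show ?thesis
    by (simp add: right_diff_distrib sum_subtractf sum_distrib_right[symmetric] sum_weight)
qed


lemma max_qtot_pos: "0 < max_qtot"
  using qtot_pos qtot_le by (rule less_le_trans)

definition max_step :: real where
  "max_step = (\<Sum>j<M. 1 / lam j)"

lemma max_step_pos: "0 < max_step"
  unfolding max_step_def using lam_pos two_le_M by (intro sum_pos) (auto simp: lessThan_empty_iff)

lemma potential_increment_bounds:
  assumes "z \<in> pp_states M" and "i < M"
  shows "1 / max_qtot \<le> \<bar>potential (target z i) - potential z\<bar>"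
    and "\<bar>potential (target z i) - potential z\<bar> \<le> max_step"
proof -
  have abs_eq: "\<bar>potential (target z i) - potential z\<bar> = 1 / rate z i"
    using potential_increment[OF assms] rate_pos[OF \<open>i < M\<close>, of z] by simp
  show "1 / max_qtot \<le> \<bar>potential (target z i) - potential z\<bar>"
    unfolding abs_eq using rate_pos[OF \<open>i < M\<close>] rate_le[OF \<open>i < M\<close>] max_qtot_pos
    by (intro divide_left_mono mult_pos_pos) auto
  obtain p where "p < M" "rate z i = lam p" using rate_eq_lam[OF \<open>i < M\<close>] by blast
  moreover have "1 / lam p \<le> max_step"
    unfolding max_step_def using \<open>p < M\<close> lam_pos by (intro member_le_sum) auto
  ultimately show "\<bar>potential (target z i) - potential z\<bar> \<le> max_step"
    by (simp add: abs_eq)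
qed

lemma potential_drift:
  fixes s :: "nat \<Rightarrow> nat"
  defines "f \<equiv> \<lambda>y. potential y - potential s"
  assumes "z \<in> pp_states M" and "max_step \<le> L"
  shows "ennreal (min \<bar>f z\<bar> L) + (if z = s then ennreal (1 / max_qtot) else 0)
    \<le> (\<Sum>\<^sub>\<infinity>y. K z y * ennreal (min \<bar>f y\<bar> L)) + (if L < \<bar>f z\<bar> + max_step then ennreal max_step else 0)"
proof -
  have "0 \<le> L" using max_step_pos \<open>max_step \<le> L\<close> by simp
  have mean: "(\<Sum>i<M. weight i z * f (target z i)) = f z"
    using potential_martingale[OF assms(2)] sum_weight[of z]
    by (simp add: f_def right_diff_distrib sum_subtractf sum_distrib_right[symmetric])
  have mixture: "min \<bar>f z\<bar> L + (if f z = 0 then 1 / max_qtot else 0)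
    \<le> (\<Sum>i<M. weight i z * min \<bar>f (target z i)\<bar> L) + (if L < \<bar>f z\<bar> + max_step then max_step else 0)"
    using weight_nonneg sum_weight mean potential_increment_bounds[OF assms(2)] \<open>max_step \<le> L\<close>
    by (intro truncated_abs_mixture) (auto simp: f_def)
  let ?A = "min \<bar>f z\<bar> L" and ?D = "if z = s then 1 / max_qtot else 0"
    and ?S = "\<Sum>i<M. weight i z * min \<bar>f (target z i)\<bar> L"
    and ?C = "if L < \<bar>f z\<bar> + max_step then max_step else 0"
  have "?D \<le> (if f z = 0 then 1 / max_qtot else 0)"
    using max_qtot_pos by (simp add: f_def)
  with mixture have "?A + ?D \<le> ?S + ?C" by linarith
  moreover have "0 \<le> ?A" "0 \<le> ?D" "0 \<le> ?S" "0 \<le> ?C"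
    using \<open>0 \<le> L\<close> max_qtot_pos max_step_pos weight_nonneg by (auto intro!: sum_nonneg)
  ultimately have ineq: "ennreal ?A + ennreal ?D \<le> ennreal ?S + ennreal ?C"
    by (simp add: ennreal_plus[symmetric] ennreal_leI del: ennreal_plus)
  have "(\<Sum>\<^sub>\<infinity>y. K z y * ennreal (min \<bar>f y\<bar> L)) = (\<Sum>i<M. ennreal (weight i z * min \<bar>f (target z i)\<bar> L))"
    unfolding infsum_pp_kernel using weight_nonneg \<open>0 \<le> L\<close>
    by (intro sum.cong) (simp_all add: ennreal_mult)
  also have "\<dots> = ennreal ?S"
    using weight_nonneg \<open>0 \<le> L\<close> by (intro sum_ennreal) simp
  finally show ?thesis
    using ineq by (auto split: if_splits)
qed

lemma mean_return_time_infinite: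
  assumes "s \<in> pp_states M"
  shows "mean_return_time K qtot s = \<infinity>"
proof -
  have "0 < 1 / max_qtot" using max_qtot_pos by simp
  have "(\<Sum>\<^sub>\<infinity>z. excursion_occupation K s z) = \<infinity>"
    by (rule excursion_occupation_total_infinite[where f="\<lambda>y. potential y - potential s",
          OF max_step_pos \<open>0 < 1 / max_qtot\<close> _ assms pp_states_closed potential_drift]) simp_all
  moreover have "(\<Sum>\<^sub>\<infinity>z. excursion_occupation K s z) \<le> ennreal max_qtot * mean_return_time K qtot s"
    using qtot_pos qtot_le by (rule excursion_occupation_total_le)
  ultimately show ?thesis
    by (auto simp: top_unique ennreal_mult_eq_top_iff)
qed

end

theorem theorem3:
  fixes M :: nat and lam mu :: "nat \<Rightarrow> real"
  assumes "M \<ge> 2" and "even M"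
    and "\<forall>i<M. lam i > 0" and "\<forall>i<M. mu i > 0"
    and "\<forall>i<M. lam i = mu i"
  shows "\<not> stabilizable M lam mu"
proof
  assume "stabilizable M lam mu"
  then obtain P where "non_idling M P"
    and stable: "stable_process (pp_kernel M lam mu P) (pp_qtot M lam mu P) (pp_states M)"
    unfolding stabilizable_def by blast
  interpret critical_even_ring M lam mu P
    using assms \<open>non_idling M P\<close> by unfold_locales auto
  from stable obtain s where "s \<in> pp_states M"
    and "positive_recurrent (pp_kernel M lam mu P) (pp_qtot M lam mu P) s"
    unfolding stable_process_def pos_rec_class_def by blast
  then show False
    using mean_return_time_infinite by (simp add: positive_recurrent_def)
qed

end
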